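(* Let $G,R,M_\odot,\mu,k,N_A>0$, $\delta>0$, and let $\gamma$ be a positive integer. Set $C=\frac{1}{\gamma!}\prod_{i=1}^{\gamma}\left(\frac{3}{\delta}+i\right)$, $\rho(r)=\frac{3M_\odot}{4\pi R^3}C\left[1-(r/R)^\delta\right]^\gamma$, $M(r)=\int_0^r4\pi s^2\rho(s)\,ds$, $P(r)=\int_r^R GM(s)\rho(s)s^{-2}\,ds$, and define the temperature by the perfect gas law $T(r)=\frac{\mu\,P(r)}{kN_A\,\rho(r)}$ for $0\le r<R$. Then with $x=r/R\in[0,1)$, $$T(r)=3\frac{\mu}{kN_A}\frac{GM_\odot}{R}\,C\,\frac{1}{\delta^2}\,\frac{1}{(1-x^\delta)^\gamma}\sum_{m=0}^{\gamma}\frac{(-\gamma)_m}{m!\left(\frac{3}{\delta}+m\right)\left(\frac{2}{\delta}+m\right)}\left[\frac{\gamma!}{\left(\frac{2}{\delta}+m+1\right)_\gamma}-x^{m\delta+2}\,{}_2F_1\!\left(-\gamma,\frac{2}{\delta}+m;\frac{2}{\delta}+m+1;x^\delta\right)\right],$$ and moreover $T(r)\to0$ as $r\to R^-$.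
   Context: $(a)_m=a(a+1)\cdots(a+m-1)$, $(a)_0=1$, is the Pochhammer symbol. ${}_2F_1(a,b;c;z)=\sum_{k\ge0}\frac{(a)_k(b)_k}{(c)_k k!}z^k$ is Gauss' hypergeometric function. *)

theory Defs
  imports "HOL-Analysis.Analysis"
begin

definition hyp2F1 :: "real \<Rightarrow> real \<Rightarrow> real \<Rightarrow> real \<Rightarrow> real" where
  "hyp2F1 a b c z = (\<Sum>k. pochhammer a k * pochhammer b k / (pochhammer c k * fact k) * z ^ k)"

definition polyC :: "real \<Rightarrow> nat \<Rightarrow> real" where
  "polyC \<delta> \<gamma> = (1 / fact \<gamma>) * (\<Prod>i=1..\<gamma>. 3 / \<delta> + real i)"

definition dens :: "real \<Rightarrow> real \<Rightarrow> real \<Rightarrow> nat \<Rightarrow> real \<Rightarrow> real" where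
  "dens Msun R \<delta> \<gamma> r = 3 * Msun / (4 * pi * R ^ 3) * polyC \<delta> \<gamma> * (1 - (r / R) powr \<delta>) ^ \<gamma>"

definition mass :: "real \<Rightarrow> real \<Rightarrow> real \<Rightarrow> nat \<Rightarrow> real \<Rightarrow> real" where
  "mass Msun R \<delta> \<gamma> r = integral {0..r} (\<lambda>s. 4 * pi * s ^ 2 * dens Msun R \<delta> \<gamma> s)"

definition pres :: "real \<Rightarrow> real \<Rightarrow> real \<Rightarrow> real \<Rightarrow> nat \<Rightarrow> real \<Rightarrow> real" where
  "pres G Msun R \<delta> \<gamma> r =
     integral {r..R} (\<lambda>s. G * mass Msun R \<delta> \<gamma> s * dens Msun R \<delta> \<gamma> s / s ^ 2)"

definition temp :: "real \<Rightarrow> real \<Rightarrow> real \<Rightarrow> real \<Rightarrow> real \<Rightarrow> real \<Rightarrow> real \<Rightarrow> nat \<Rightarrow> real \<Rightarrow> real" where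
  "temp G Msun R \<mu> k NA \<delta> \<gamma> r =
     \<mu> * pres G Msun R \<delta> \<gamma> r / (k * NA * dens Msun R \<delta> \<gamma> r)"

end

theory Submission
  imports Defs
begin

(* Expanding (1 - y powr delta)^gamma binomially, with coefficients (-gamma)_i / i!, turns the
   density, the enclosed mass and the integrand of the pressure into finite sums of powers of
   y = s / R, which integrate termwise.  Integrating from x = r / R to 1, the inner sum of the
   resulting double sum is, for each m, a terminating 2F1(-gamma, b; b + 1; .) with b = 2/delta + m,
   taken at x powr delta and at 1; the value at 1 is gamma! / (b + 1)_gamma, an alternating
   binomial sum (Chu-Vandermonde).  For the limit, the density decreases outwards, so
   P(r) <= rho(r) G M(R) (R - r) / r^2 and hence 0 <= T(r) = O(R - r). *)

lemma pochhammer_neg_nat_div_fact: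
  "pochhammer (- of_nat n) i / fact i = (-1) ^ i * (of_nat (n choose i) :: 'a :: field_char_0)"
  by (simp add: binomial_gbinomial gbinomial_pochhammer)

lemma power_one_minus_eq_sum_pochhammer:
  fixes z :: "'a :: field_char_0"
  shows "(1 - z) ^ n = (\<Sum>i\<le>n. pochhammer (- of_nat n) i / fact i * z ^ i)"
proof -
  have "(1 - z) ^ n = (- z + 1) ^ n" by simp
  also have "\<dots> = (\<Sum>i\<le>n. of_nat (n choose i) * (- z) ^ i * 1 ^ (n - i))"
    by (rule binomial_ring)
  also have "\<dots> = (\<Sum>i\<le>n. pochhammer (- of_nat n) i / fact i * z ^ i)"
    by (intro sum.cong refl) (simp add: pochhammer_neg_nat_div_fact power_minus[of z])
  finally show ?thesis .
qed

lemma sum_alternating_binomial_div: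
  fixes b :: real
  assumes "b > 0"
  shows "(\<Sum>i\<le>n. (-1) ^ i * real (n choose i) / (b + real i)) = fact n / pochhammer b (Suc n)"
  using assms
proof (induction n arbitrary: b)
  case 0
  then show ?case by simp
next
  case (Suc n)
  define S where "S n b = (\<Sum>i\<le>n. (-1) ^ i * real (n choose i) / (b + real i))" for n b
  have shift: "S m b = 1 / b - (\<Sum>i\<le>n. (-1) ^ i * real (m choose Suc i) / (b + 1 + real i))"
    if "m \<le> Suc n" for m
  proof -
    have "S m b = (\<Sum>i\<le>Suc n. (-1) ^ i * real (m choose i) / (b + real i))"
      unfolding S_def using that by (intro sum.mono_neutral_left) auto
    also have "\<dots> = 1 / b - (\<Sum>i\<le>n. (-1) ^ i * real (m choose Suc i) / (b + 1 + real i))"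
      by (subst sum.atMost_Suc_shift) (simp add: sum_negf add_ac)
    finally show ?thesis .
  qed
  \<comment> \<open>Pascal's rule, with the index of the second half shifted by one\<close>
  have "S (Suc n) b = S n b - S n (b + 1)"
    using shift[of "Suc n"] shift[of n]
    by (simp add: S_def sum.distrib add_divide_distrib ring_distribs)
  also have "\<dots> = fact n / pochhammer b (Suc n) - fact n / pochhammer (b + 1) (Suc n)"
    using Suc by (simp add: S_def)
  also have "\<dots> = fact (Suc n) / pochhammer b (Suc (Suc n))"
  proof -
    have "fact n / pochhammer b (Suc n) = fact n * (b + real (Suc n)) / pochhammer b (Suc (Suc n))"
      using Suc.prems by (simp add: pochhammer_rec'[of b "Suc n"] pochhammer_eq_0_iff)
    moreover have "fact n / pochhammer (b + 1) (Suc n) = fact n * b / pochhammer b (Suc (Suc n))"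
      using Suc.prems by (simp add: pochhammer_rec[of b "Suc n"])
    ultimately show ?thesis
      by (simp add: diff_divide_distrib[symmetric] algebra_simps)
  qed
  finally show ?case by (simp add: S_def)
qed

lemma hyp2F1_neg_nat:
  "hyp2F1 (- real n) b c z
     = (\<Sum>i\<le>n. pochhammer (- real n) i * pochhammer b i / (pochhammer c i * fact i) * z ^ i)"
  unfolding hyp2F1_def
proof (rule suminf_finite)
  fix i assume "i \<notin> {..n}"
  then show "pochhammer (- real n) i * pochhammer b i / (pochhammer c i * fact i) * z ^ i = 0"
    by (auto simp: pochhammer_eq_0_iff)
qed simp

lemma hyp2F1_neg_nat_succ:
  fixes b :: real
  assumes "b > 0"
  shows "hyp2F1 (- real n) b (b + 1) z
           = b * (\<Sum>i\<le>n. pochhammer (- real n) i / fact i * z ^ i / (b + real i))"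
  unfolding hyp2F1_neg_nat sum_distrib_left
proof (rule sum.cong[OF refl])
  fix i
  have "pochhammer b i * (b + real i) = b * pochhammer (b + 1) i"
    by (metis pochhammer_rec pochhammer_rec' mult.commute)
  moreover have "b + real i \<noteq> 0"
    using assms by (simp add: add_pos_nonneg)
  ultimately have "pochhammer b i = b * pochhammer (b + 1) i / (b + real i)"
    by (simp add: eq_divide_eq)
  moreover have "pochhammer (b + 1) i \<noteq> 0"
    using assms by (auto simp: pochhammer_eq_0_iff)
  ultimately show "pochhammer (- real n) i * pochhammer b i / (pochhammer (b + 1) i * fact i) * z ^ i
      = b * (pochhammer (- real n) i / fact i * z ^ i / (b + real i))"
    by (simp add: mult_ac)
qed

lemma hyp2F1_neg_nat_succ_at_1:
  fixes b :: real
  assumes "b > 0"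
  shows "hyp2F1 (- real n) b (b + 1) 1 = fact n / pochhammer (b + 1) n"
proof -
  have "hyp2F1 (- real n) b (b + 1) 1 = b * (fact n / pochhammer b (Suc n))"
    using assms by (simp add: hyp2F1_neg_nat_succ pochhammer_neg_nat_div_fact
                              sum_alternating_binomial_div)
  then show ?thesis
    using assms by (simp add: pochhammer_rec)
qed

lemma powr_mult_power_powr:
  fixes y :: real
  assumes "0 \<le> y"
  shows "y powr p * (y powr d) ^ i = y powr (real i * d + p)"
  using assms by (cases "y = 0") (simp_all add: powr_power powr_add)

lemma has_integral_scaled_powr:
  fixes R a b p :: real
  assumes "R > 0" "0 \<le> a" "a \<le> b" "p > -1"
  shows "((\<lambda>s. (s / R) powr p) has_integral
           R / (p + 1) * ((b / R) powr (p + 1) - (a / R) powr (p + 1))) {a..b}"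
proof -
  let ?F = "\<lambda>s. R / (p + 1) * (s / R) powr (p + 1)"
  have "((\<lambda>s. (s / R) powr p) has_integral ?F b - ?F a) {a..b}"
  proof (rule fundamental_theorem_of_calculus_interior[OF \<open>a \<le> b\<close>])
    show "continuous_on {a..b} ?F"
      using assms by (intro continuous_intros continuous_on_powr') auto
  next
    fix s assume "s \<in> {a<..<b}"
    then have "s / R > 0" using assms by auto
    then have "(?F has_real_derivative R / (p + 1) * ((p + 1) * (s / R) powr p * (1 / R))) (at s)"
      by (auto intro!: derivative_eq_intros DERIV_fun_powr)
    moreover have "R / (p + 1) * ((p + 1) * (s / R) powr p * (1 / R)) = (s / R) powr p"
      using assms by simp
    ultimately show "(?F has_vector_derivative (s / R) powr p) (at s)"
      by (simp add: has_real_derivative_iff_has_vector_derivative)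
  qed
  then show ?thesis by (simp add: right_diff_distrib)
qed

lemma sum_pochhammer_powr_eq_hyp2F1:
  fixes d c x :: real and m n :: nat
  assumes "d > 0" "c > 0" "x \<ge> 0"
  defines "b \<equiv> c / d + real m"
  shows "(\<Sum>i\<le>n. pochhammer (- real n) i / fact i / (real (m + i) * d + c)
                    * (1 - x powr (real (m + i) * d + c)))
         = (fact n / pochhammer (b + 1) n
            - x powr (real m * d + c) * hyp2F1 (- real n) b (b + 1) (x powr d)) / (d * b)"
proof -
  have "b > 0"
    using assms by (simp add: b_def add_pos_nonneg)
  \<comment> \<open>the factor \<open>1 ^ i\<close> exhibits the first sum as the hypergeometric series at 1\<close>
  have summand: "pochhammer (- real n) i / fact i / (real (m + i) * d + c)
                * (1 - x powr (real (m + i) * d + c))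
              = 1 / d * (pochhammer (- real n) i / fact i * 1 ^ i / (b + real i)
                  - x powr (real m * d + c)
                    * (pochhammer (- real n) i / fact i * (x powr d) ^ i / (b + real i)))" for i
  proof -
    have "real (m + i) * d + c = d * (b + real i)"
      using assms by (simp add: b_def field_simps)
    moreover have "x powr (real (m + i) * d + c) = x powr (real m * d + c) * (x powr d) ^ i"
      using powr_mult_power_powr[OF \<open>x \<ge> 0\<close>, of "real m * d + c" d i]
      by (simp add: algebra_simps)
    ultimately show ?thesis
      by (simp add: right_diff_distrib diff_divide_distrib mult_ac)
  qed
  have "(\<Sum>i\<le>n. pochhammer (- real n) i / fact i / (real (m + i) * d + c)
                          * (1 - x powr (real (m + i) * d + c)))
      = 1 / d * ((\<Sum>i\<le>n. pochhammer (- real n) i / fact i * 1 ^ i / (b + real i))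
          - x powr (real m * d + c)
            * (\<Sum>i\<le>n. pochhammer (- real n) i / fact i * (x powr d) ^ i / (b + real i)))"
    by (simp only: summand sum_subtractf flip: sum_distrib_left)
  also have "\<dots> = (hyp2F1 (- real n) b (b + 1) 1
                     - x powr (real m * d + c) * hyp2F1 (- real n) b (b + 1) (x powr d)) / (d * b)"
    unfolding hyp2F1_neg_nat_succ[OF \<open>b > 0\<close>] using \<open>b > 0\<close>
    by (simp add: mult.left_commute[of _ b] flip: right_diff_distrib)
  finally show ?thesis
    using \<open>b > 0\<close> by (simp add: hyp2F1_neg_nat_succ_at_1)
qed

definition temp_hyp_sum :: "real \<Rightarrow> nat \<Rightarrow> real \<Rightarrow> real" where
  "temp_hyp_sum \<delta> \<gamma> x =
     (\<Sum>m=0..\<gamma>. pochhammer (- real \<gamma>) m / (fact m * (3 / \<delta> + real m) * (2 / \<delta> + real m))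
        * (fact \<gamma> / pochhammer (2 / \<delta> + real m + 1) \<gamma>
           - x powr (real m * \<delta> + 2)
             * hyp2F1 (- real \<gamma>) (2 / \<delta> + real m) (2 / \<delta> + real m + 1) (x powr \<delta>)))"

lemma dens_eq_sum:
  "dens Msun R \<delta> \<gamma> s = 3 * Msun / (4 * pi * R ^ 3) * polyC \<delta> \<gamma>
     * (\<Sum>i\<le>\<gamma>. pochhammer (- real \<gamma>) i / fact i * ((s / R) powr \<delta>) ^ i)"
  unfolding dens_def by (simp add: power_one_minus_eq_sum_pochhammer)

context
  fixes Msun R \<delta> :: real and \<gamma> :: nat
  assumes R_pos: "R > 0" and \<delta>_pos: "\<delta> > 0"
begin

abbreviation \<alpha> :: "nat \<Rightarrow> real" where
  "\<alpha> i \<equiv> pochhammer (- real \<gamma>) i / fact i"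

lemma polyC_pos: "polyC \<delta> \<gamma> > 0"
  unfolding polyC_def using \<delta>_pos by (intro mult_pos_pos prod_pos) (auto intro!: add_pos_nonneg)

lemma mass_integrand_has_integral:
  assumes "0 \<le> r"
  shows "((\<lambda>s. 4 * pi * s ^ 2 * dens Msun R \<delta> \<gamma> s) has_integral
           3 * Msun * polyC \<delta> \<gamma>
           * (\<Sum>j\<le>\<gamma>. \<alpha> j / (real j * \<delta> + 3) * (r / R) powr (real j * \<delta> + 3))) {0..r}"
proof -
  define K where "K = 3 * Msun * polyC \<delta> \<gamma> / R"
  define e where "e j = real j * \<delta> + 2" for j
  have integral: "((\<lambda>s. \<Sum>j\<le>\<gamma>. K * \<alpha> j * (s / R) powr e j) has_integral
      (\<Sum>j\<le>\<gamma>. K * \<alpha> j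
         * (R / (e j + 1) * ((r / R) powr (e j + 1) - (0 / R) powr (e j + 1))))) {0..r}"
    using R_pos \<delta>_pos assms unfolding e_def
    by (intro has_integral_sum has_integral_mult_right has_integral_scaled_powr)
       (auto intro!: add_pos_nonneg)
  have integrand:
    "(\<Sum>j\<le>\<gamma>. K * \<alpha> j * (s / R) powr e j) = 4 * pi * s ^ 2 * dens Msun R \<delta> \<gamma> s"
    if "s \<in> {0..r}" for s
  proof -
    have scale: "4 * pi * s ^ 2 * (3 * Msun / (4 * pi * R ^ 3)) * polyC \<delta> \<gamma> = K * (s / R) ^ 2"
      using R_pos by (simp add: K_def field_simps power2_eq_square power3_eq_cube)
    have "4 * pi * s ^ 2 * dens Msun R \<delta> \<gamma> s
        = K * (s / R) ^ 2 * (\<Sum>j\<le>\<gamma>. \<alpha> j * ((s / R) powr \<delta>) ^ j)"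
      unfolding dens_eq_sum scale[symmetric] by (simp only: mult.assoc)
    also have "\<dots> = (\<Sum>j\<le>\<gamma>. K * \<alpha> j * ((s / R) ^ 2 * ((s / R) powr \<delta>) ^ j))"
      by (simp add: sum_distrib_left mult_ac)
    also have "\<dots> = (\<Sum>j\<le>\<gamma>. K * \<alpha> j * (s / R) powr e j)"
      using that R_pos powr_mult_power_powr[of "s / R" 2] by (simp add: e_def)
    finally show ?thesis by (rule sym)
  qed
  have "(\<Sum>j\<le>\<gamma>. K * \<alpha> j
          * (R / (e j + 1) * ((r / R) powr (e j + 1) - (0 / R) powr (e j + 1))))
      = 3 * Msun * polyC \<delta> \<gamma>
        * (\<Sum>j\<le>\<gamma>. \<alpha> j / (real j * \<delta> + 3) * (r / R) powr (real j * \<delta> + 3))"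
    unfolding sum_distrib_left using R_pos
    by (intro sum.cong refl) (simp add: K_def e_def add.commute)
  then show ?thesis
    using has_integral_eq[OF integrand integral] by simp
qed

lemma mass_eq:
  assumes "0 \<le> r"
  shows "mass Msun R \<delta> \<gamma> r = 3 * Msun * polyC \<delta> \<gamma>
           * (\<Sum>j\<le>\<gamma>. \<alpha> j / (real j * \<delta> + 3) * (r / R) powr (real j * \<delta> + 3))"
  unfolding mass_def using mass_integrand_has_integral[OF assms] by (rule integral_unique)

lemma mass_div_power2_eq_sum:
  assumes "0 \<le> s"
  shows "mass Msun R \<delta> \<gamma> s / s ^ 2 = 3 * Msun * polyC \<delta> \<gamma> / R ^ 2
           * (\<Sum>j\<le>\<gamma>. \<alpha> j / (real j * \<delta> + 3) * (s / R) powr (real j * \<delta> + 1))"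
proof (cases "s = 0")
  case True
  then show ?thesis by simp
next
  case False
  have "(s / R) powr (real j * \<delta> + 3) = (s / R) powr (real j * \<delta> + 1) * (s / R) ^ 2" for j
  proof -
    have "(s / R) powr (real j * \<delta> + 3) = (s / R) powr ((real j * \<delta> + 1) + 2)"
      by (simp add: add.assoc)
    also have "\<dots> = (s / R) powr (real j * \<delta> + 1) * (s / R) ^ 2"
      using assms R_pos
      by (simp only: powr_add[of _ "real j * \<delta> + 1" 2] powr_numeral divide_nonneg_pos)
    finally show ?thesis .
  qed
  then have "mass Msun R \<delta> \<gamma> s = 3 * Msun * polyC \<delta> \<gamma> * (s / R) ^ 2
      * (\<Sum>j\<le>\<gamma>. \<alpha> j / (real j * \<delta> + 3) * (s / R) powr (real j * \<delta> + 1))"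
    using assms by (simp add: mass_eq sum_distrib_left sum_distrib_right mult_ac)
  then show ?thesis
    using False R_pos by (simp add: power_divide)
qed

lemma pres_integrand_eq_sum:
  assumes "0 \<le> s"
  shows "G * mass Msun R \<delta> \<gamma> s * dens Msun R \<delta> \<gamma> s / s ^ 2
           = G * 3 * Msun * polyC \<delta> \<gamma> * (3 * Msun / (4 * pi * R ^ 3) * polyC \<delta> \<gamma>) / R ^ 2
             * (\<Sum>j\<le>\<gamma>. \<Sum>i\<le>\<gamma>. \<alpha> j / (real j * \<delta> + 3) * \<alpha> i
                 * (s / R) powr (real (j + i) * \<delta> + 1))"
proof -
  define a where "a j = \<alpha> j / (real j * \<delta> + 3)" for j
  have "s / R \<ge> 0"
    using assms R_pos by simp
  have "(\<Sum>j\<le>\<gamma>. a j * (s / R) powr (real j * \<delta> + 1))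
        * (\<Sum>i\<le>\<gamma>. \<alpha> i * ((s / R) powr \<delta>) ^ i)
      = (\<Sum>j\<le>\<gamma>. \<Sum>i\<le>\<gamma>. a j * \<alpha> i * (s / R) powr (real (j + i) * \<delta> + 1))"
    unfolding sum_product
  proof (intro sum.cong refl)
    fix j i
    have "(s / R) powr (real j * \<delta> + 1) * ((s / R) powr \<delta>) ^ i
        = (s / R) powr (real (j + i) * \<delta> + 1)"
      using powr_mult_power_powr[OF \<open>s / R \<ge> 0\<close>, of "real j * \<delta> + 1" \<delta> i]
      by (simp add: algebra_simps)
    then show "a j * (s / R) powr (real j * \<delta> + 1) * (\<alpha> i * ((s / R) powr \<delta>) ^ i)
        = a j * \<alpha> i * (s / R) powr (real (j + i) * \<delta> + 1)"
      by (metis mult.assoc mult.left_commute)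
  qed
  moreover have "G * mass Msun R \<delta> \<gamma> s * dens Msun R \<delta> \<gamma> s / s ^ 2
      = G * (mass Msun R \<delta> \<gamma> s / s ^ 2) * dens Msun R \<delta> \<gamma> s"
    by simp
  ultimately show ?thesis
    unfolding mass_div_power2_eq_sum[OF assms] dens_eq_sum a_def
    by (simp only: mult_ac times_divide_eq_left times_divide_eq_right)
qed

lemma pres_integrand_has_integral:
  assumes "0 \<le> r" "r \<le> R"
  shows "((\<lambda>s. G * mass Msun R \<delta> \<gamma> s * dens Msun R \<delta> \<gamma> s / s ^ 2) has_integral
           G * 3 * Msun * polyC \<delta> \<gamma> * (3 * Msun / (4 * pi * R ^ 3) * polyC \<delta> \<gamma>) / R
           * (\<Sum>j\<le>\<gamma>. \<alpha> j / (real j * \<delta> + 3)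
               * (\<Sum>i\<le>\<gamma>. \<alpha> i / (real (j + i) * \<delta> + 2)
                   * (1 - (r / R) powr (real (j + i) * \<delta> + 2))))) {r..R}"
proof -
  define K where
    "K = G * 3 * Msun * polyC \<delta> \<gamma> * (3 * Msun / (4 * pi * R ^ 3) * polyC \<delta> \<gamma>) / R ^ 2"
  define a where "a j = \<alpha> j / (real j * \<delta> + 3)" for j
  define e where "e j i = real (j + i) * \<delta> + 1" for j i
  have "((\<lambda>s. K * (\<Sum>j\<le>\<gamma>. \<Sum>i\<le>\<gamma>. a j * \<alpha> i * (s / R) powr e j i)) has_integral
      K * (\<Sum>j\<le>\<gamma>. \<Sum>i\<le>\<gamma>. a j * \<alpha> i
             * (R / (e j i + 1) * ((R / R) powr (e j i + 1) - (r / R) powr (e j i + 1))))) {r..R}"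
    using R_pos \<delta>_pos assms unfolding e_def
    by (intro has_integral_mult_right has_integral_sum has_integral_scaled_powr)
       (auto intro!: add_pos_nonneg)
  moreover have "K * (\<Sum>j\<le>\<gamma>. \<Sum>i\<le>\<gamma>. a j * \<alpha> i * (s / R) powr e j i)
      = G * mass Msun R \<delta> \<gamma> s * dens Msun R \<delta> \<gamma> s / s ^ 2" if "s \<in> {r..R}" for s
    using pres_integrand_eq_sum[of s] that assms by (simp add: K_def a_def e_def)
  ultimately have "((\<lambda>s. G * mass Msun R \<delta> \<gamma> s * dens Msun R \<delta> \<gamma> s / s ^ 2) has_integral
      K * (\<Sum>j\<le>\<gamma>. \<Sum>i\<le>\<gamma>. a j * \<alpha> i
             * (R / (e j i + 1) * ((R / R) powr (e j i + 1) - (r / R) powr (e j i + 1))))) {r..R}"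
    by (rule has_integral_eq[rotated])
  also have "K * (\<Sum>j\<le>\<gamma>. \<Sum>i\<le>\<gamma>. a j * \<alpha> i
             * (R / (e j i + 1) * ((R / R) powr (e j i + 1) - (r / R) powr (e j i + 1))))
      = K * R * (\<Sum>j\<le>\<gamma>. a j * (\<Sum>i\<le>\<gamma>. \<alpha> i / (real (j + i) * \<delta> + 2)
                                    * (1 - (r / R) powr (real (j + i) * \<delta> + 2))))"
    unfolding sum_distrib_left mult.assoc using R_pos
    by (intro sum.cong refl) (simp add: e_def algebra_simps diff_divide_distrib)
  also have "K * R
      = G * 3 * Msun * polyC \<delta> \<gamma> * (3 * Msun / (4 * pi * R ^ 3) * polyC \<delta> \<gamma>) / R"
    using R_pos by (simp add: K_def power2_eq_square)
  finally show ?thesis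
    unfolding a_def .
qed

lemma pres_eq:
  assumes "0 \<le> r" "r \<le> R"
  shows "pres G Msun R \<delta> \<gamma> r
           = 3 * G * Msun * polyC \<delta> \<gamma> * (3 * Msun / (4 * pi * R ^ 3) * polyC \<delta> \<gamma>) / (R * \<delta> ^ 2)
             * temp_hyp_sum \<delta> \<gamma> (r / R)"
proof -
  have "\<alpha> m / (real m * \<delta> + 3)
        * (\<Sum>i\<le>\<gamma>. \<alpha> i / (real (m + i) * \<delta> + 2) * (1 - (r / R) powr (real (m + i) * \<delta> + 2)))
      = 1 / \<delta> ^ 2
        * (pochhammer (- real \<gamma>) m / (fact m * (3 / \<delta> + real m) * (2 / \<delta> + real m))
          * (fact \<gamma> / pochhammer (2 / \<delta> + real m + 1) \<gamma>
             - (r / R) powr (real m * \<delta> + 2)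
               * hyp2F1 (- real \<gamma>) (2 / \<delta> + real m) (2 / \<delta> + real m + 1) ((r / R) powr \<delta>)))"
    for m
  proof -
    have "r / R \<ge> 0"
      using assms R_pos by simp
    then have "(\<Sum>i\<le>\<gamma>. \<alpha> i / (real (m + i) * \<delta> + 2) * (1 - (r / R) powr (real (m + i) * \<delta> + 2)))
        = (fact \<gamma> / pochhammer (2 / \<delta> + real m + 1) \<gamma>
             - (r / R) powr (real m * \<delta> + 2)
               * hyp2F1 (- real \<gamma>) (2 / \<delta> + real m) (2 / \<delta> + real m + 1) ((r / R) powr \<delta>))
          / (\<delta> * (2 / \<delta> + real m))"
      using \<delta>_pos by (intro sum_pochhammer_powr_eq_hyp2F1) auto
    moreover have "real m * \<delta> + 3 = \<delta> * (3 / \<delta> + real m)"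
      using \<delta>_pos by (simp add: field_simps)
    ultimately show ?thesis
      by (simp add: power2_eq_square mult_ac)
  qed
  then show ?thesis
    unfolding pres_def temp_hyp_sum_def
    using integral_unique[OF pres_integrand_has_integral[OF assms]]
    by (simp add: atLeast0AtMost sum_distrib_left mult_ac)
qed

lemma temp_eq:
  assumes "Msun \<noteq> 0" "k \<noteq> 0" "NA \<noteq> 0" "0 \<le> r" "r < R"
  shows "temp G Msun R \<mu> k NA \<delta> \<gamma> r =
           3 * (\<mu> / (k * NA)) * (G * Msun / R) * polyC \<delta> \<gamma> * (1 / \<delta> ^ 2)
           * (1 / (1 - (r / R) powr \<delta>) ^ \<gamma>) * temp_hyp_sum \<delta> \<gamma> (r / R)"
proof -
  have "(r / R) powr \<delta> < 1"
    using powr_less_mono2[OF \<delta>_pos, of "r / R" 1] assms R_pos by simp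
  then show ?thesis
    unfolding temp_def dens_def pres_eq[OF assms(4) less_imp_le[OF assms(5)]]
    using assms R_pos \<delta>_pos polyC_pos by (simp add: field_simps)
qed

lemma scaled_powr_bounds:
  assumes "0 \<le> s" "s \<le> R"
  shows "0 \<le> (s / R) powr \<delta>" "(s / R) powr \<delta> \<le> 1"
  using assms R_pos \<delta>_pos by (auto intro: powr_le1)

lemma dens_nonneg:
  assumes "Msun \<ge> 0" "0 \<le> s" "s \<le> R"
  shows "dens Msun R \<delta> \<gamma> s \<ge> 0"
  unfolding dens_def using assms R_pos polyC_pos scaled_powr_bounds[OF assms(2,3)] by simp

lemma dens_pos:
  assumes "Msun > 0" "0 \<le> s" "s < R"
  shows "dens Msun R \<delta> \<gamma> s > 0"
proof -
  have "(s / R) powr \<delta> < 1"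
    using powr_less_mono2[OF \<delta>_pos, of "s / R" 1] assms R_pos by simp
  then show ?thesis
    unfolding dens_def using assms R_pos polyC_pos by simp
qed

lemma dens_antimono:
  assumes "Msun \<ge> 0" "0 \<le> r" "r \<le> s" "s \<le> R"
  shows "dens Msun R \<delta> \<gamma> s \<le> dens Msun R \<delta> \<gamma> r"
proof -
  have "(r / R) powr \<delta> \<le> (s / R) powr \<delta>"
    using assms R_pos \<delta>_pos by (intro powr_mono2) (auto simp: divide_right_mono)
  then have "(1 - (s / R) powr \<delta>) ^ \<gamma> \<le> (1 - (r / R) powr \<delta>) ^ \<gamma>"
    using scaled_powr_bounds[of s] assms by (intro power_mono) auto
  then show ?thesis
    unfolding dens_def using assms R_pos polyC_pos by (intro mult_left_mono) auto
qed

lemma mass_mono: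
  assumes "Msun \<ge> 0" "0 \<le> r" "r \<le> s" "s \<le> R"
  shows "mass Msun R \<delta> \<gamma> r \<le> mass Msun R \<delta> \<gamma> s"
  unfolding mass_def
proof (rule integral_subset_le)
  show "(\<lambda>t. 4 * pi * t ^ 2 * dens Msun R \<delta> \<gamma> t) integrable_on {0..r}"
       "(\<lambda>t. 4 * pi * t ^ 2 * dens Msun R \<delta> \<gamma> t) integrable_on {0..s}"
    using assms by (auto intro: has_integral_integrable[OF mass_integrand_has_integral])
  show "\<forall>t \<in> {0..s}. 0 \<le> 4 * pi * t ^ 2 * dens Msun R \<delta> \<gamma> t"
    using assms dens_nonneg by simp
qed (use assms in auto)

lemma mass_nonneg:
  assumes "Msun \<ge> 0" "0 \<le> s" "s \<le> R"
  shows "mass Msun R \<delta> \<gamma> s \<ge> 0"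
  using mass_mono[of 0 s] assms by (simp add: mass_def)

lemma pres_nonneg:
  assumes "G \<ge> 0" "Msun \<ge> 0" "0 \<le> r" "r \<le> R"
  shows "pres G Msun R \<delta> \<gamma> r \<ge> 0"
  unfolding pres_def using pres_integrand_has_integral[OF assms(3,4)]
  by (rule has_integral_nonneg[OF integrable_integral[OF has_integral_integrable]])
     (use assms mass_nonneg dens_nonneg in auto)

lemma pres_le:
  assumes "G \<ge> 0" "Msun \<ge> 0" "0 < r" "r \<le> R"
  shows "pres G Msun R \<delta> \<gamma> r
           \<le> G * mass Msun R \<delta> \<gamma> R / r ^ 2 * (R - r) * dens Msun R \<delta> \<gamma> r"
proof -
  let ?B = "G * mass Msun R \<delta> \<gamma> R * dens Msun R \<delta> \<gamma> r / r ^ 2"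
  have "G * mass Msun R \<delta> \<gamma> s * dens Msun R \<delta> \<gamma> s / s ^ 2 \<le> ?B" if "s \<in> {r..R}" for s
  proof (rule frac_le)
    have "mass Msun R \<delta> \<gamma> s \<le> mass Msun R \<delta> \<gamma> R"
      "dens Msun R \<delta> \<gamma> s \<le> dens Msun R \<delta> \<gamma> r"
      using that assms by (auto intro: mass_mono dens_antimono)
    moreover have "0 \<le> mass Msun R \<delta> \<gamma> s" "0 \<le> dens Msun R \<delta> \<gamma> s"
      using that assms by (auto intro: mass_nonneg dens_nonneg)
    ultimately show "G * mass Msun R \<delta> \<gamma> s * dens Msun R \<delta> \<gamma> s
        \<le> G * mass Msun R \<delta> \<gamma> R * dens Msun R \<delta> \<gamma> r"
      using assms by (intro mult_mono mult_left_mono) auto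
    show "0 \<le> G * mass Msun R \<delta> \<gamma> R * dens Msun R \<delta> \<gamma> r"
      using assms R_pos by (auto intro!: mult_nonneg_nonneg mass_nonneg dens_nonneg)
    show "r ^ 2 \<le> s ^ 2"
      using that assms by (auto intro: power_mono)
  qed (use assms in auto)
  then have "pres G Msun R \<delta> \<gamma> r \<le> integral {r..R} (\<lambda>_. ?B)"
    unfolding pres_def using pres_integrand_has_integral[of r G] assms
    by (intro integral_le) (auto intro: has_integral_integrable)
  then show ?thesis
    using assms by (simp add: mult_ac)
qed

lemma temp_tendsto_0:
  assumes "G > 0" "Msun > 0" "\<mu> > 0" "k > 0" "NA > 0"
  shows "(temp G Msun R \<mu> k NA \<delta> \<gamma> \<longlongrightarrow> 0) (at_left R)"
proof (rule tendsto_sandwich)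
  let ?bound = "\<lambda>r. \<mu> / (k * NA) * (G * mass Msun R \<delta> \<gamma> R / r ^ 2 * (R - r))"
  have "0 \<le> temp G Msun R \<mu> k NA \<delta> \<gamma> r
      \<and> temp G Msun R \<mu> k NA \<delta> \<gamma> r \<le> ?bound r"
    if "0 < r" "r < R" for r
  proof -
    have "dens Msun R \<delta> \<gamma> r > 0"
      using that assms by (intro dens_pos) auto
    moreover have "0 \<le> pres G Msun R \<delta> \<gamma> r"
      using that assms by (intro pres_nonneg) auto
    moreover have "pres G Msun R \<delta> \<gamma> r
        \<le> G * mass Msun R \<delta> \<gamma> R / r ^ 2 * (R - r) * dens Msun R \<delta> \<gamma> r"
      using that assms by (intro pres_le) auto
    ultimately have "0 \<le> pres G Msun R \<delta> \<gamma> r / dens Msun R \<delta> \<gamma> r"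
      "pres G Msun R \<delta> \<gamma> r / dens Msun R \<delta> \<gamma> r
         \<le> G * mass Msun R \<delta> \<gamma> R / r ^ 2 * (R - r)"
      by (simp_all add: pos_divide_le_eq)
    moreover have "temp G Msun R \<mu> k NA \<delta> \<gamma> r
        = \<mu> / (k * NA) * (pres G Msun R \<delta> \<gamma> r / dens Msun R \<delta> \<gamma> r)"
      unfolding temp_def by simp
    moreover have "0 \<le> \<mu> / (k * NA)"
      using assms by simp
    ultimately show ?thesis
      by (metis mult_left_mono mult_nonneg_nonneg)
  qed
  then show "\<forall>\<^sub>F r in at_left R. 0 \<le> temp G Msun R \<mu> k NA \<delta> \<gamma> r"
    "\<forall>\<^sub>F r in at_left R. temp G Msun R \<mu> k NA \<delta> \<gamma> r \<le> ?bound r"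
    using eventually_at_left_real[OF R_pos] by (auto elim!: eventually_mono)
  show "((\<lambda>_. 0) \<longlongrightarrow> 0) (at_left R)"
    by simp
  have "(?bound \<longlongrightarrow> \<mu> / (k * NA) * (G * mass Msun R \<delta> \<gamma> R / R ^ 2 * (R - R)))
      (at_left R)"
    using R_pos by (intro tendsto_intros) auto
  then show "(?bound \<longlongrightarrow> 0) (at_left R)"
    by simp
qed

end

theorem mainTheorem5:
  fixes G R Msun \<mu> k NA \<delta> :: real and \<gamma> :: nat
  assumes "G > 0" "R > 0" "Msun > 0" "\<mu> > 0" "k > 0" "NA > 0" "\<delta> > 0" "\<gamma> > 0"
  shows "(\<forall>r. 0 \<le> r \<and> r < R \<longrightarrow>
           (let x = r / R in
            temp G Msun R \<mu> k NA \<delta> \<gamma> r =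
              3 * (\<mu> / (k * NA)) * (G * Msun / R) * polyC \<delta> \<gamma> * (1 / \<delta> ^ 2)
              * (1 / (1 - x powr \<delta>) ^ \<gamma>)
              * (\<Sum>m=0..\<gamma>. pochhammer (- real \<gamma>) m
                   / (fact m * (3 / \<delta> + real m) * (2 / \<delta> + real m))
                   * (fact \<gamma> / pochhammer (2 / \<delta> + real m + 1) \<gamma>
                      - x powr (real m * \<delta> + 2)
                        * hyp2F1 (- real \<gamma>) (2 / \<delta> + real m) (2 / \<delta> + real m + 1) (x powr \<delta>)))))
         \<and> ((temp G Msun R \<mu> k NA \<delta> \<gamma>) \<longlongrightarrow> 0) (at_left R)"
  using assms by (simp add: Let_def temp_eq temp_hyp_sum_def temp_tendsto_0)

end
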